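(* Let $X$ be a Hilbert space and let $T:X\rightrightarrows X$ be semilocally monotone on $X$ (i.e., semilocally monotone at every point of $\operatorname{dom}T$), and suppose $\operatorname{dom}T$ is convex. Then $T$ is (globally) monotone on $X$.
   Context: $X$ is a real Hilbert space. For $T:X\rightrightarrows X$, $\operatorname{dom}T=\{u:T(u)\ne\emptyset\}$, $\operatorname{gph}T=\{(u,v):v\in T(u)\}$. $T$ is monotone if $\langle v_1-v_2,u_1-u_2\rangle\ge0$ for all $(u_1,v_1),(u_2,v_2)\in\operatorname{gph}T$. $T$ is semilocally monotone at $\bar u\in\operatorname{dom}T$ if there is a neighborhood $U$ of $\bar u$ in $X$ such that $\langle v_1-v_2,u_1-u_2\rangle\ge0$ for all $(u_1,v_1),(u_2,v_2)\in\operatorname{gph}T\cap(U\times X)$. *)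

theory Defs
  imports "HOL-Analysis.Analysis"
begin

definition dom_sv :: "('a \<Rightarrow> 'b set) \<Rightarrow> 'a set" where
  "dom_sv T = {u. T u \<noteq> {}}"

definition gph_sv :: "('a \<Rightarrow> 'b set) \<Rightarrow> ('a \<times> 'b) set" where
  "gph_sv T = {(u, v). v \<in> T u}"

definition monotone_sv :: "('a::real_inner \<Rightarrow> 'a set) \<Rightarrow> bool" where
  "monotone_sv T \<longleftrightarrow>
     (\<forall>(u1, v1) \<in> gph_sv T. \<forall>(u2, v2) \<in> gph_sv T. inner (v1 - v2) (u1 - u2) \<ge> 0)"

definition semilocally_monotone_at :: "('a::real_inner \<Rightarrow> 'a set) \<Rightarrow> 'a \<Rightarrow> bool" where
  "semilocally_monotone_at T ubar \<longleftrightarrow> ubar \<in> dom_sv T \<and>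
     (\<exists>U. open U \<and> ubar \<in> U \<and>
        (\<forall>(u1, v1) \<in> gph_sv T \<inter> (U \<times> UNIV). \<forall>(u2, v2) \<in> gph_sv T \<inter> (U \<times> UNIV).
            inner (v1 - v2) (u1 - u2) \<ge> 0))"

end

theory Submission
  imports Defs
begin

text \<open>Join two points of the (convex) domain by a segment. By compactness of the segment, a
  Lebesgue number yields a uniform subdivision whose consecutive points always share a
  neighbourhood on which \<open>T\<close> is monotone. There, monotonicity says that the selections from
  \<open>T\<close> are nondecreasing in the direction of the segment; these local inequalities telescope
  along the subdivision to the global one.\<close>

definition monotone_sv_on :: "('a::real_inner \<Rightarrow> 'a set) \<Rightarrow> 'a set \<Rightarrow> bool" where
  "monotone_sv_on T U \<longleftrightarrow> (\<forall>a\<in>U. \<forall>b\<in>U. \<forall>x\<in>T a. \<forall>y\<in>T b. 0 \<le> inner (x - y) (a - b))"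

lemma monotone_sv_on_iff_gph:
  "monotone_sv_on T U \<longleftrightarrow>
     (\<forall>(u1, v1) \<in> gph_sv T \<inter> (U \<times> UNIV). \<forall>(u2, v2) \<in> gph_sv T \<inter> (U \<times> UNIV).
        inner (v1 - v2) (u1 - u2) \<ge> 0)"
  unfolding monotone_sv_on_def gph_sv_def by (simp add: Ball_def) blast

lemma monotone_sv_iff_on_UNIV: "monotone_sv T \<longleftrightarrow> monotone_sv_on T UNIV"
  unfolding monotone_sv_def monotone_sv_on_iff_gph by simp

lemma semilocally_monotone_at_iff:
  "semilocally_monotone_at T u \<longleftrightarrow> u \<in> dom_sv T \<and> (\<exists>U. open U \<and> u \<in> U \<and> monotone_sv_on T U)"
  unfolding semilocally_monotone_at_def monotone_sv_on_iff_gph ..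

lemma uniform_subdivision_in_open_cover:
  fixes g :: "real \<Rightarrow> 'a::topological_space"
  assumes cont: "continuous_on UNIV g"
    and cover: "\<And>t. t \<in> {0..1} \<Longrightarrow> \<exists>U. open U \<and> g t \<in> U \<and> P U"
  obtains N :: nat where "N > 0"
    "\<And>k. k < N \<Longrightarrow> \<exists>U. P U \<and> g (k / N) \<in> U \<and> g (Suc k / N) \<in> U"
proof -
  define \<G> where "\<G> = (\<lambda>U. g -` U) ` {U. open U \<and> P U}"
  have covered: "{0..1} \<subseteq> \<Union>\<G>"
    using cover unfolding \<G>_def by blast
  have "open H" if "H \<in> \<G>" for H
    using that cont unfolding \<G>_def by (auto intro!: continuous_open_vimage simp: continuous_on_eq_continuous_at)
  then obtain \<epsilon> where "0 < \<epsilon>" and lebesgue: "\<And>t. t \<in> {0..1} \<Longrightarrow> \<exists>H\<in>\<G>. ball t \<epsilon> \<subseteq> H"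
    using Heine_Borel_lemma[OF compact_Icc covered] by blast
  then obtain N :: nat where N: "N > 0" "inverse (real N) < \<epsilon>"
    using real_arch_inverse by blast
  have "\<exists>U. P U \<and> g (k / N) \<in> U \<and> g (Suc k / N) \<in> U" if "k < N" for k
  proof -
    have "real k / N \<in> {0..1}"
      using that by auto
    then obtain U where "P U" and U: "ball (real k / N) \<epsilon> \<subseteq> g -` U"
      using lebesgue unfolding \<G>_def by blast
    have "Suc k / N \<in> ball (real k / N) \<epsilon>"
      using N by (simp add: dist_real_def add_divide_distrib divide_inverse algebra_simps)
    moreover have "real k / N \<in> ball (real k / N) \<epsilon>"
      using \<open>0 < \<epsilon>\<close> by simp
    ultimately show ?thesis
      using \<open>P U\<close> U by blast
  qed
  with N show thesis
    using that by blast
qed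

lemma monotone_sv_on_directional:
  assumes "monotone_sv_on T U" "a \<in> U" "b \<in> U" "b - a = c *\<^sub>R d" "c > 0"
    and "p \<in> T a" "q \<in> T b"
  shows "0 \<le> inner (q - p) d"
proof -
  have "0 \<le> inner (q - p) (b - a)"
    using assms(1-3,6,7) unfolding monotone_sv_on_def by blast
  then have "0 \<le> c * inner (q - p) d"
    using assms(4) by simp
  with \<open>c > 0\<close> show ?thesis
    by (simp add: zero_le_mult_iff)
qed

lemma directional_monotone_chain:
  fixes x :: "nat \<Rightarrow> 'a::real_inner"
  assumes "0 < N"
    and step: "\<And>k a b. k < N \<Longrightarrow> a \<in> T (x k) \<Longrightarrow> b \<in> T (x (Suc k)) \<Longrightarrow> 0 \<le> inner (b - a) d"
    and nonempty: "\<And>k. k \<le> N \<Longrightarrow> T (x k) \<noteq> {}"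
    and "v \<in> T (x 0)" "w \<in> T (x N)"
  shows "0 \<le> inner (w - v) d"
proof -
  have "\<forall>w\<in>T (x (Suc k)). 0 \<le> inner (w - v) d" if "k < N" for k
    using that
  proof (induction k)
    case 0
    with \<open>v \<in> T (x 0)\<close> show ?case
      using step by blast
  next
    case (Suc k)
    obtain a where a: "a \<in> T (x (Suc k))"
      using nonempty[of "Suc k"] Suc.prems by auto
    show ?case
    proof
      fix b assume b: "b \<in> T (x (Suc (Suc k)))"
      have "inner (b - v) d = inner (b - a) d + inner (a - v) d"
        by (simp add: inner_diff_left)
      moreover have "0 \<le> inner (b - a) d"
        using step[OF Suc.prems a b] .
      moreover have "0 \<le> inner (a - v) d"
        using Suc a by simp
      ultimately show "0 \<le> inner (b - v) d"
        by linarith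
    qed
  qed
  then show ?thesis
    using \<open>0 < N\<close> \<open>w \<in> T (x N)\<close> by (metis Suc_pred' diff_less zero_less_one)
qed

lemma monotone_pair_if_segment_in_dom:
  fixes T :: "'a::real_inner \<Rightarrow> 'a set"
  assumes semiloc: "\<forall>u\<in>dom_sv T. semilocally_monotone_at T u"
    and segment: "closed_segment u1 u2 \<subseteq> dom_sv T"
    and "v1 \<in> T u1" "v2 \<in> T u2"
  shows "0 \<le> inner (v1 - v2) (u1 - u2)"
proof -
  define d where "d = u2 - u1"
  define g where "g t = u1 + t *\<^sub>R d" for t :: real
  have g_dom: "g t \<in> dom_sv T" if "t \<in> {0..1}" for t
  proof -
    have "g t = (1 - t) *\<^sub>R u1 + t *\<^sub>R u2"
      by (simp add: g_def d_def algebra_simps)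
    then show ?thesis
      using that segment unfolding closed_segment_def by auto
  qed
  have g_cont: "continuous_on UNIV g"
    unfolding g_def by (intro continuous_intros)
  have "\<exists>U. open U \<and> g t \<in> U \<and> monotone_sv_on T U" if "t \<in> {0..1}" for t
    using semiloc g_dom[OF that] by (auto simp: semilocally_monotone_at_iff)
  then obtain N :: nat where "N > 0" and fine:
    "\<And>k. k < N \<Longrightarrow> \<exists>U. monotone_sv_on T U \<and> g (k / N) \<in> U \<and> g (Suc k / N) \<in> U"
    using uniform_subdivision_in_open_cover[OF g_cont] by blast
  define x where "x k = g (k / N)" for k :: nat
  have "0 \<le> inner (v2 - v1) d"
  proof (rule directional_monotone_chain[where x = x and N = N])
    show "0 < N"
      using \<open>N > 0\<close> .
  next
    fix k a b assume k: "k < N" and "a \<in> T (x k)" "b \<in> T (x (Suc k))"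
    moreover obtain U where "monotone_sv_on T U" "x k \<in> U" "x (Suc k) \<in> U"
      using fine[OF k] unfolding x_def by blast
    moreover have "x (Suc k) - x k = inverse N *\<^sub>R d"
      using \<open>N > 0\<close> by (simp add: x_def g_def algebra_simps add_divide_distrib divide_inverse)
    ultimately show "0 \<le> inner (b - a) d"
      using \<open>N > 0\<close> by (intro monotone_sv_on_directional) auto
  next
    fix k assume "k \<le> N"
    then show "T (x k) \<noteq> {}"
      using g_dom[of "k / N"] \<open>N > 0\<close> unfolding x_def dom_sv_def by auto
  next
    show "v1 \<in> T (x 0)" "v2 \<in> T (x N)"
      using \<open>v1 \<in> T u1\<close> \<open>v2 \<in> T u2\<close> \<open>N > 0\<close> by (simp_all add: x_def g_def d_def)
  qed
  then show ?thesis
    by (metis d_def inner_minus_left inner_minus_right minus_diff_eq)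
qed

theorem lemma3p4:
  fixes T :: "'a::{real_inner, complete_space} \<Rightarrow> 'a set"
  assumes "\<forall>ubar \<in> dom_sv T. semilocally_monotone_at T ubar"
    and "convex (dom_sv T)"
  shows "monotone_sv T"
  unfolding monotone_sv_iff_on_UNIV monotone_sv_on_def
proof (intro ballI)
  fix u1 u2 v1 v2 assume v1: "v1 \<in> T u1" and v2: "v2 \<in> T u2"
  then have "closed_segment u1 u2 \<subseteq> dom_sv T"
    using assms(2) by (intro closed_segment_subset) (auto simp: dom_sv_def)
  then show "0 \<le> inner (v1 - v2) (u1 - u2)"
    by (rule monotone_pair_if_segment_in_dom[OF assms(1) _ v1 v2])
qed

end
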